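(* Let $\mathcal{P}\subseteq\mathbb{Z}_{\geq0}$ with $0\in\mathcal{P}$ and $\mathcal{P}-2\neq\emptyset$. Then $e_\mathcal{P}(z)=\sum_{n\in\mathcal{P}}z^n/n!$ satisfies the H-schema.
   Context: $\mathcal{P}-2=\{n-2:n\in\mathcal{P},n\ge2\}$. A function $\epsilon(z)$ analytic at $0$ with radius of convergence $R$ (possibly $\infty$) satisfies the H-schema if: (i) $\epsilon(0)\neq0$ and $\epsilon(z)$ cannot be written as $\epsilon_0+\epsilon_1z$ for any $\epsilon_0,\epsilon_1\in\mathbb{C}$; (ii) all Taylor coefficients $[z^n]\epsilon(z)$ are $\geq0$; (iii) there is a unique $\tau\in\mathbb{R}_{>0}$ with $\tau<R$ and $\epsilon(\tau)-\tau\epsilon'(\tau)=0$. *)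

theory Defs
  imports "HOL-Complex_Analysis.Complex_Analysis"
begin

definition taylor_coeff :: "(complex \<Rightarrow> complex) \<Rightarrow> nat \<Rightarrow> complex" where
  "taylor_coeff f n = (deriv ^^ n) f 0 / fact n"

definition H_schema :: "(complex \<Rightarrow> complex) \<Rightarrow> bool" where
  "H_schema eps \<longleftrightarrow>
     eps analytic_on {0} \<and>
     eps 0 \<noteq> 0 \<and>
     \<not> (\<exists>e0 e1. \<forall>\<^sub>F z in nhds 0. eps z = e0 + e1 * z) \<and>
     (\<forall>n. taylor_coeff eps n \<in> \<real> \<and> Re (taylor_coeff eps n) \<ge> 0) \<and>
     (\<exists>!\<tau>::real. 0 < \<tau> \<and> ereal \<tau> < conv_radius (taylor_coeff eps) \<and>
        eps (complex_of_real \<tau>) - complex_of_real \<tau> * deriv eps (complex_of_real \<tau>) = 0)"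

definition e_P :: "nat set \<Rightarrow> complex \<Rightarrow> complex" where
  "e_P P z = (\<Sum>n. if n \<in> P then z ^ n / fact n else 0)"

end

theory Submission imports Defs begin

text \<open>
  Every entire function \<open>\<epsilon>(z) = \<Sum> c\<^sub>n z\<^sup>n\<close> with \<open>c\<^sub>n \<ge> 0\<close>, \<open>c\<^sub>0 > 0\<close> and some \<open>c\<^sub>m > 0\<close>, \<open>m \<ge> 2\<close>,
  satisfies the H-schema; \<open>e\<^sub>P\<close> is such a function. On the positive axis
  \<open>\<epsilon>(t) - t \<epsilon>'(t) = \<Sum> (1 - n) c\<^sub>n t\<^sup>n\<close>: every term with \<open>n \<ge> 1\<close> is non-increasing in \<open>t\<close> and the
  \<open>m\<close>-th is strictly decreasing and unbounded below, so this continuous function starts at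
  \<open>c\<^sub>0 > 0\<close>, becomes negative, and is strictly decreasing, hence has exactly one positive zero.
\<close>

lemma taylor_coeff_eq_fps_nth:
  assumes "f has_fps_expansion F"
  shows "taylor_coeff f n = fps_nth F n"
  using fps_nth_fps_expansion[OF assms] by (simp add: taylor_coeff_def)

lemma has_fps_expansion_powser:
  fixes a :: "nat \<Rightarrow> complex"
  assumes "conv_radius a > 0"
  shows "(\<lambda>z. \<Sum>n. a n * z ^ n) has_fps_expansion Abs_fps a"
  using assms unfolding has_fps_expansion_def fps_conv_radius_def by (simp add: eval_fps_def)

lemma taylor_coeff_eq_0_if_locally_affine:
  assumes "\<forall>\<^sub>F z in nhds 0. f z = e0 + e1 * z" and "n \<ge> 2"
  shows "taylor_coeff f n = 0"
proof -
  have "(deriv ^^ n) f 0 = (deriv ^^ n) (\<lambda>z. e0 + e1 * z) 0"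
    by (rule higher_deriv_cong_ev[OF assms(1) refl])
  also have "\<dots> = 0"
    using assms(2) by (subst higher_deriv_add_at) (auto intro: analytic_intros)
  finally show ?thesis by (simp add: taylor_coeff_def)
qed

lemma conv_radius_of_real [simp]:
  "conv_radius (\<lambda>n. of_real (c n) :: 'a::{real_normed_algebra_1,banach}) = conv_radius c"
  using conv_radius_norm[of "\<lambda>n. of_real (c n) :: 'a"] conv_radius_norm[of c] by simp

lemma powser_minus_mult_deriv_sums:
  fixes c :: "nat \<Rightarrow> 'a::{real_normed_field,banach}"
  assumes summable: "\<And>z. summable (\<lambda>n. c n * z ^ n)"
  shows "(\<lambda>n. (1 - of_nat n) * c n * z ^ n) sums
           ((\<Sum>n. c n * z ^ n) - z * deriv (\<lambda>z. \<Sum>n. c n * z ^ n) z)"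
proof -
  have deriv: "deriv (\<lambda>z. \<Sum>n. c n * z ^ n) z = (\<Sum>n. diffs c n * z ^ n)"
    by (rule DERIV_imp_deriv, rule termdiffs_strong_converges_everywhere, rule summable)
  have "(\<lambda>n. diffs c n * z ^ n * z) sums ((\<Sum>n. diffs c n * z ^ n) * z)"
    by (rule sums_mult2, rule summable_sums, rule termdiff_converges_all, rule summable)
  then have "(\<lambda>n. of_nat (Suc n) * c (Suc n) * z ^ Suc n) sums (z * deriv (\<lambda>z. \<Sum>n. c n * z ^ n) z)"
    by (simp add: deriv diffs_def algebra_simps)
  then have "(\<lambda>n. of_nat n * c n * z ^ n) sums (z * deriv (\<lambda>z. \<Sum>n. c n * z ^ n) z)"
    by (subst (asm) sums_Suc_iff) simp
  from sums_diff[OF summable_sums[OF summable] this] show ?thesis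
    by (simp add: algebra_simps)
qed

text \<open>The value at \<open>0\<close> of the tangent line at \<open>t\<close> to the graph of \<open>\<Sum> c\<^sub>n t\<^sup>n\<close>.\<close>

definition tangent_intercept :: "(nat \<Rightarrow> real) \<Rightarrow> real \<Rightarrow> real" where
  "tangent_intercept c t = (\<Sum>n. (1 - real n) * c n * t ^ n)"

lemma tangent_intercept_0 [simp]: "tangent_intercept c 0 = c 0"
  unfolding tangent_intercept_def using powser_zero[of "\<lambda>n. (1 - real n) * c n"] by simp

context
  fixes c :: "nat \<Rightarrow> real"
  assumes entire: "conv_radius c = \<infinity>"
begin

lemma tangent_intercept_sums: "(\<lambda>n. (1 - real n) * c n * t ^ n) sums tangent_intercept c t"
proof -
  have "\<And>t. summable (\<lambda>n. c n * t ^ n)"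
    using entire by (intro summable_in_conv_radius) simp
  from powser_minus_mult_deriv_sums[OF this] show ?thesis
    unfolding tangent_intercept_def by (simp add: sums_iff)
qed

lemma isCont_tangent_intercept: "isCont (tangent_intercept c) t"
  unfolding tangent_intercept_def
  by (rule isCont_powser_converges_everywhere) (use tangent_intercept_sums in \<open>auto simp: sums_iff\<close>)

lemma complex_powser_tangent_intercept:
  defines "f \<equiv> \<lambda>z. \<Sum>n. complex_of_real (c n) * z ^ n"
  shows "f (of_real t) - of_real t * deriv f (of_real t) = of_real (tangent_intercept c t)"
proof -
  have "\<And>z. summable (\<lambda>n. complex_of_real (c n) * z ^ n)"
    using entire by (intro summable_in_conv_radius) simp
  from powser_minus_mult_deriv_sums[OF this, of "of_real t"]
  have "(\<lambda>n. of_real ((1 - real n) * c n * t ^ n)) sums (f (of_real t) - of_real t * deriv f (of_real t))"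
    by (simp add: f_def)
  moreover have "(\<lambda>n. of_real ((1 - real n) * c n * t ^ n)) sums complex_of_real (tangent_intercept c t)"
    using tangent_intercept_sums by (subst sums_of_real_iff)
  ultimately show ?thesis by (rule sums_unique2)
qed

end

context
  fixes c :: "nat \<Rightarrow> real"
  assumes entire: "conv_radius c = \<infinity>" and nonneg: "\<And>n. c n \<ge> 0"
begin

lemma tangent_intercept_strict_antimono:
  assumes "m \<ge> 2" "c m > 0" "0 \<le> s" "s < t"
  shows "tangent_intercept c t < tangent_intercept c s"
proof -
  define d where "d n = (real n - 1) * c n * (t ^ n - s ^ n)" for n
  have "d = (\<lambda>n. (1 - real n) * c n * s ^ n - (1 - real n) * c n * t ^ n)"
    by (simp add: fun_eq_iff d_def algebra_simps)
  then have "d sums (tangent_intercept c s - tangent_intercept c t)"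
    by (simp add: sums_diff tangent_intercept_sums entire)
  moreover have "d n \<ge> 0" for n
  proof (cases "n = 0")
    case False
    have "s ^ n \<le> t ^ n" using assms by (intro power_mono) auto
    then show ?thesis using False nonneg[of n] by (simp add: d_def)
  qed (simp add: d_def)
  moreover have "d m > 0"
  proof -
    have "s ^ m < t ^ m" using assms by (intro power_strict_mono) auto
    then show ?thesis using assms by (simp add: d_def)
  qed
  ultimately show ?thesis
    using suminf_pos2[of d m] by (simp add: sums_iff)
qed

lemma tangent_intercept_le:
  assumes "m \<noteq> 0" "t \<ge> 0"
  shows "tangent_intercept c t \<le> c 0 - (real m - 1) * c m * t ^ m"
proof -
  define d where "d n = - ((1 - real n) * c n * t ^ n)" for n
  have d_sums: "d sums (- tangent_intercept c t)"
    unfolding d_def by (intro sums_minus tangent_intercept_sums entire)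
  have "sum d {0, m} \<le> suminf d"
  proof (rule sum_le_suminf)
    show "summable d" using d_sums by (simp add: sums_iff)
    show "0 \<le> d n" if "n \<in> - {0, m}" for n
      using that nonneg[of n] assms(2) by (cases n) (auto simp: d_def)
  qed simp
  then show ?thesis
    using d_sums assms(1) by (simp add: sums_iff d_def algebra_simps)
qed

lemma tangent_intercept_negative:
  assumes "m \<ge> 2" "c m > 0"
  obtains T where "T > 0" "tangent_intercept c T < 0"
proof
  define k where "k = (real m - 1) * c m"
  define T where "T = max 1 (c 0 / k) + 1"
  have "k > 0" using assms by (simp add: k_def)
  have "T > 1" unfolding T_def by simp
  have "c 0 / k < T" unfolding T_def by simp
  then have "c 0 < k * T" using \<open>k > 0\<close> by (simp add: pos_divide_less_eq mult.commute)
  also have "\<dots> \<le> k * T ^ m"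
    using \<open>k > 0\<close> \<open>T > 1\<close> assms(1)
    by (intro mult_left_mono power_increasing[of 1 m T, simplified]) auto
  finally show "tangent_intercept c T < 0"
    using tangent_intercept_le[of m T] \<open>T > 1\<close> assms(1) by (simp add: k_def)
  show "T > 0" using \<open>T > 1\<close> by simp
qed

lemma ex1_tangent_intercept_root:
  assumes "c 0 > 0" "m \<ge> 2" "c m > 0"
  shows "\<exists>!\<tau>. \<tau> > 0 \<and> tangent_intercept c \<tau> = 0"
proof -
  obtain T where "T > 0" "tangent_intercept c T < 0"
    using tangent_intercept_negative[OF assms(2,3)] .
  then obtain \<tau> where "0 \<le> \<tau>" "\<tau> \<le> T" "tangent_intercept c \<tau> = 0"
    using IVT2[of "tangent_intercept c" T 0 0] assms(1) isCont_tangent_intercept[OF entire]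
    by auto
  moreover have "\<tau> \<noteq> 0" using calculation assms(1) by auto
  moreover have "\<sigma> = \<tau>" if "\<sigma> > 0" "tangent_intercept c \<sigma> = 0" for \<sigma>
    using tangent_intercept_strict_antimono[OF assms(2,3), of \<sigma> \<tau>]
      tangent_intercept_strict_antimono[OF assms(2,3), of \<tau> \<sigma>] that calculation
    by (cases \<sigma> \<tau> rule: linorder_cases) auto
  ultimately show ?thesis by (intro ex1I[of _ \<tau>]) auto
qed

end

theorem H_schema_powser_nonneg:
  fixes c :: "nat \<Rightarrow> real"
  assumes entire: "conv_radius c = \<infinity>" and nonneg: "\<And>n. c n \<ge> 0"
    and "c 0 > 0" "m \<ge> 2" "c m > 0"
  shows "H_schema (\<lambda>z. \<Sum>n. complex_of_real (c n) * z ^ n)"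
    (is "H_schema ?f")
proof -
  have expansion: "?f has_fps_expansion Abs_fps (\<lambda>n. of_real (c n))"
    using entire by (intro has_fps_expansion_powser) simp
  then have coeff: "taylor_coeff ?f = (\<lambda>n. of_real (c n))"
    by (simp add: taylor_coeff_eq_fps_nth fun_eq_iff)
  have not_affine: "\<not> (\<exists>e0 e1. \<forall>\<^sub>F z in nhds 0. ?f z = e0 + e1 * z)"
    using taylor_coeff_eq_0_if_locally_affine[of ?f _ _ m] assms(4,5) by (auto simp: coeff)
  have "?f 0 = of_real (c 0)"
    using powser_zero[of "\<lambda>n. of_real (c n)"] by simp
  moreover have "\<exists>!\<tau>::real. 0 < \<tau> \<and> ereal \<tau> < conv_radius (taylor_coeff ?f) \<and>
      ?f (of_real \<tau>) - of_real \<tau> * deriv ?f (of_real \<tau>) = 0"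
    using ex1_tangent_intercept_root[OF entire nonneg assms(3-5)]
    by (simp add: coeff entire complex_powser_tangent_intercept[OF entire])
  ultimately show ?thesis
    unfolding H_schema_def
    using has_fps_expansion_imp_analytic_0[OF expansion] not_affine nonneg assms(3)
    by (simp add: coeff)
qed

theorem lemma7p2:
  fixes P :: "nat set"
  assumes "0 \<in> P"
    and "{n - 2 | n. n \<in> P \<and> n \<ge> 2} \<noteq> {}"
  shows "H_schema (e_P P)"
proof -
  define c where "c n = (if n \<in> P then 1 / fact n else 0 :: real)" for n
  obtain m where "m \<in> P" "m \<ge> 2" using assms(2) by auto
  have "e_P P = (\<lambda>z. \<Sum>n. complex_of_real (c n) * z ^ n)"
    by (auto simp: e_P_def c_def intro!: ext suminf_cong)
  moreover have "conv_radius c = \<infinity>"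
  proof (rule conv_radius_inftyI'')
    fix x :: real
    have "norm (c n * x ^ n) \<le> inverse (fact n) * norm x ^ n" for n
      by (simp add: c_def abs_mult power_abs field_simps)
    then show "summable (\<lambda>n. c n * x ^ n)"
      by (rule summable_comparison_test'[OF summable_exp])
  qed
  ultimately show ?thesis
    using H_schema_powser_nonneg[of c m] assms(1) \<open>m \<in> P\<close> \<open>m \<ge> 2\<close> by (simp add: c_def)
qed

end
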